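(* Let $V$ be a space. The following are equivalent: (i) $V$ is homothetic to $\langle 1,\tau\rangle_{\mathbb{Q}}$ for some root of unity $\tau$; (ii) $V$ contains a rational triple containing two perpendicular vectors; (iii) $V$ contains a rational $4$-tuple containing two perpendicular vectors.
   Context: A space is a $2$-dimensional $\mathbb{Q}$-vector subspace $V\subset\mathbb{C}$ containing two $\mathbb{R}$-linearly independent vectors; $\langle 1,\tau\rangle_{\mathbb{Q}}=\mathbb{Q}+\mathbb{Q}\tau$. Spaces $V_1,V_2$ are homothetic if $V_2=\lambda V_1$ for some $\lambda\in\mathbb{C}^*$. A rational $n$-tuple in $V$ is a set of $n$ vectors of $V$ spanning $n$ distinct lines through $0$ such that for any two of them $v,w$ the argument of $w/v$ is a rational multiple of $\pi$. *)

theory Defs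
  imports "HOL-Analysis.Analysis"
begin

definition qspan2 :: "complex \<Rightarrow> complex \<Rightarrow> complex set" where
  "qspan2 a b = {of_rat p * a + of_rat q * b | p q. True}"

definition q_indep2 :: "complex \<Rightarrow> complex \<Rightarrow> bool" where
  "q_indep2 a b \<longleftrightarrow> (\<forall>p q :: rat. of_rat p * a + of_rat q * b = 0 \<longrightarrow> p = 0 \<and> q = 0)"

definition r_indep2 :: "complex \<Rightarrow> complex \<Rightarrow> bool" where
  "r_indep2 v w \<longleftrightarrow> (\<forall>r s :: real. of_real r * v + of_real s * w = 0 \<longrightarrow> r = 0 \<and> s = 0)"

definition is_space :: "complex set \<Rightarrow> bool" where
  "is_space V \<longleftrightarrow> (\<exists>a b. q_indep2 a b \<and> V = qspan2 a b) \<and>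
                   (\<exists>v\<in>V. \<exists>w\<in>V. r_indep2 v w)"

definition homothetic :: "complex set \<Rightarrow> complex set \<Rightarrow> bool" where
  "homothetic V1 V2 \<longleftrightarrow> (\<exists>l::complex. l \<noteq> 0 \<and> V2 = (\<lambda>z. l * z) ` V1)"

definition root_of_unity :: "complex \<Rightarrow> bool" where
  "root_of_unity z \<longleftrightarrow> (\<exists>n::nat. n > 0 \<and> z ^ n = 1)"

text \<open>A rational n-tuple in V: n vectors of V spanning n distinct lines through 0,
  such that the argument of w/v is a rational multiple of pi for any two of them.\<close>
definition rational_tuple :: "nat \<Rightarrow> complex set \<Rightarrow> complex set \<Rightarrow> bool" where
  "rational_tuple n V S \<longleftrightarrow> finite S \<and> card S = n \<and> S \<subseteq> V \<and> 0 \<notin> S \<and>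
     (\<forall>v\<in>S. \<forall>w\<in>S. v \<noteq> w \<longrightarrow> w / v \<notin> \<real>) \<and>
     (\<forall>v\<in>S. \<forall>w\<in>S. \<exists>q::rat. Arg (w / v) = of_rat q * pi)"

definition has_perp_pair :: "complex set \<Rightarrow> bool" where
  "has_perp_pair S \<longleftrightarrow> (\<exists>v\<in>S. \<exists>w\<in>S. v \<noteq> w \<and> v \<bullet> w = 0)"

end

theory Submission
  imports Defs
begin

text \<open>If \<open>V = l\<langle>1, \<tau>\<rangle>\<close> with \<open>\<tau>\<close> a (necessarily non-real) root of unity, then
  \<open>l{1, \<tau>, 1 + \<tau>, 1 - \<tau>}\<close> is a rational 4-tuple: \<open>1 + \<tau>\<close> and \<open>1 - \<tau>\<close> are the
  perpendicular diagonals of the rhombus spanned by \<open>1\<close> and \<open>\<tau>\<close>, and the squared directions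
  \<open>x / cnj x\<close> of the four vectors are the roots of unity \<open>1, \<tau>\<^sup>2, \<tau>, -\<tau>\<close>. Conversely, let \<open>u \<perp> v\<close> and \<open>w\<close> form a
  rational triple. Then \<open>V = u\<langle>1, \<zeta>\<rangle>\<close> with \<open>\<zeta> = v / u\<close> purely imaginary, so \<open>\<langle>1, \<zeta>\<rangle>\<close>
  is closed under conjugation and contains both \<open>z = w / u\<close> and \<open>cnj z\<close>; hence it equals
  \<open>cnj z\<langle>1, z / cnj z\<rangle>\<close>. Finally \<open>z / cnj z = cis (2 Arg z)\<close> is a root of unity because
  \<open>Arg z\<close> is a rational multiple of \<open>\<pi>\<close>.\<close>

lemma of_real_of_rat_complex [simp]: "complex_of_real (of_rat q) = of_rat q"
  by (cases q) (simp add: of_rat_rat)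

lemma of_rat_in_Reals [simp]: "(of_rat q :: complex) \<in> \<real>"
  by (metis of_real_of_rat_complex Reals_of_real)

lemma cnj_of_rat [simp]: "cnj (of_rat q) = of_rat q"
  by (metis of_real_of_rat_complex complex_cnj_complex_of_real)

lemma qspan2_iff: "x \<in> qspan2 a b \<longleftrightarrow> (\<exists>p q. x = of_rat p * a + of_rat q * b)"
  by (simp add: qspan2_def)

lemma qspan2_lincomb:
  assumes "x \<in> qspan2 a b" "y \<in> qspan2 a b"
  shows "of_rat r * x + of_rat s * y \<in> qspan2 a b"
proof -
  obtain p q p' q' where "x = of_rat p * a + of_rat q * b" "y = of_rat p' * a + of_rat q' * b"
    using assms by (auto simp: qspan2_iff)
  then have "of_rat r * x + of_rat s * y = of_rat (r * p + s * p') * a + of_rat (r * q + s * q') * b"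
    by (simp add: of_rat_add of_rat_mult algebra_simps)
  then show ?thesis
    by (auto simp: qspan2_iff)
qed

lemma qspan2_subset:
  assumes "u \<in> qspan2 a b" "v \<in> qspan2 a b"
  shows "qspan2 u v \<subseteq> qspan2 a b"
  using qspan2_lincomb[OF assms] by (auto simp: qspan2_iff)

lemma qspan2_scale: "qspan2 (l * a) (l * b) = (\<lambda>z. l * z) ` qspan2 a b"
  by (force simp: qspan2_def algebra_simps)

lemma divide_in_Reals_iff: "(b::complex) / a \<in> \<real> \<longleftrightarrow> Im (cnj a * b) = 0"
  by (auto simp: complex_is_Real_iff Im_divide algebra_simps)

lemma r_indep2_iff: "r_indep2 u v \<longleftrightarrow> v / u \<notin> \<real>"
proof
  assume indep: "r_indep2 u v"
  show "v / u \<notin> \<real>"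
  proof
    assume "v / u \<in> \<real>"
    then obtain r where r: "v / u = of_real r"
      by (auto elim: Reals_cases)
    have "u \<noteq> 0"
      using indep[unfolded r_indep2_def, rule_format, of 1 0] by auto
    then have "of_real r * u + of_real (-1) * v = 0"
      using r by (simp add: field_simps)
    then show False
      using indep[unfolded r_indep2_def, rule_format, of r "-1"] by simp
  qed
next
  assume nonreal: "v / u \<notin> \<real>"
  then have "u \<noteq> 0"
    by auto
  show "r_indep2 u v"
    unfolding r_indep2_def
  proof (intro allI impI)
    fix r s :: real
    assume rs: "of_real r * u + of_real s * v = 0"
    have "s = 0"
    proof (rule ccontr)
      assume "s \<noteq> 0"
      with rs \<open>u \<noteq> 0\<close> have "v / u = of_real (- r / s)"
        by (simp add: field_simps add_eq_0_iff)
      with nonreal show False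
        by simp
    qed
    with rs \<open>u \<noteq> 0\<close> show "r = 0 \<and> s = 0"
      by simp
  qed
qed

lemma qspan2_eq_if_r_indep2:
  assumes u: "u \<in> qspan2 a b" and v: "v \<in> qspan2 a b" and indep: "r_indep2 u v"
  shows "qspan2 u v = qspan2 a b"
proof
  show "qspan2 u v \<subseteq> qspan2 a b"
    using u v by (rule qspan2_subset)
  obtain p1 q1 p2 q2 where u_eq: "u = of_rat p1 * a + of_rat q1 * b"
    and v_eq: "v = of_rat p2 * a + of_rat q2 * b"
    using u v by (auto simp: qspan2_iff)
  define D where "D = p1 * q2 - p2 * q1"
  have Da: "of_rat D * a = of_rat q2 * u + of_rat (- q1) * v"
    and Db: "of_rat D * b = of_rat (- p2) * u + of_rat p1 * v"
    unfolding u_eq v_eq D_def by (simp_all add: of_rat_diff of_rat_mult of_rat_minus algebra_simps)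
  have "D \<noteq> 0"
  proof
    assume "D = 0"
    then have "q2 = 0 \<and> q1 = 0" "p2 = 0 \<and> p1 = 0"
      using indep Da Db unfolding r_indep2_def
      by (metis of_real_of_rat_complex mult_zero_left of_rat_0 of_rat_eq_0_iff neg_equal_0_iff_equal)+
    with indep show False
      by (simp add: u_eq r_indep2_iff)
  qed
  have cancel_D: "x \<in> qspan2 u v" if "of_rat D * x \<in> qspan2 u v" for x
  proof -
    have "of_rat (inverse D) * (of_rat D * x) + of_rat 0 * (of_rat D * x) \<in> qspan2 u v"
      using qspan2_lincomb[OF that that] .
    then show ?thesis
      using \<open>D \<noteq> 0\<close> by (simp add: of_rat_inverse mult.assoc[symmetric])
  qed
  have "of_rat D * a \<in> qspan2 u v" "of_rat D * b \<in> qspan2 u v"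
    unfolding Da Db qspan2_iff by blast+
  then have "a \<in> qspan2 u v" "b \<in> qspan2 u v"
    by (blast intro: cancel_D)+
  then show "qspan2 a b \<subseteq> qspan2 u v"
    by (rule qspan2_subset)
qed

lemma is_space_eq_homothetic_qspan2:
  assumes "is_space V" "u \<in> V" "v \<in> V" "v / u \<notin> \<real>"
  shows "V = (\<lambda>x. u * x) ` qspan2 1 (v / u)"
proof -
  obtain a b where V: "V = qspan2 a b"
    using assms(1) by (auto simp: is_space_def)
  have "r_indep2 u v"
    using assms(4) by (simp add: r_indep2_iff)
  with assms(2,3) have "V = qspan2 u v"
    unfolding V by (rule qspan2_eq_if_r_indep2[symmetric])
  moreover have "u \<noteq> 0"
    using assms(4) by auto
  ultimately show ?thesis
    using qspan2_scale[of u 1 "v / u"] by simp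
qed

lemma nonreal_if_is_space_homothetic:
  assumes "is_space V" "homothetic (qspan2 1 \<tau>) V"
  shows "\<tau> \<notin> \<real>"
proof
  assume "\<tau> \<in> \<real>"
  then have real_span: "qspan2 1 \<tau> \<subseteq> \<real>"
    by (auto simp: qspan2_iff intro!: Reals_add Reals_mult)
  obtain l where "l \<noteq> 0" and V: "V = (\<lambda>z. l * z) ` qspan2 1 \<tau>"
    using assms(2) by (auto simp: homothetic_def)
  obtain x y where "x \<in> V" "y \<in> V" "r_indep2 x y"
    using assms(1) by (auto simp: is_space_def)
  then obtain r s where "r \<in> \<real>" "s \<in> \<real>" "x = l * r" "y = l * s"
    using V real_span by blast
  with \<open>l \<noteq> 0\<close> \<open>r_indep2 x y\<close> show False
    by (simp add: r_indep2_iff)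
qed

lemma qspan2_imaginary_eq_homothetic:
  assumes "Re \<zeta> = 0" and z: "z \<in> qspan2 1 \<zeta>" and "Re z \<noteq> 0" "Im z \<noteq> 0"
  shows "qspan2 1 \<zeta> = (\<lambda>x. cnj z * x) ` qspan2 1 (z / cnj z)"
proof -
  have cnj_z: "cnj z \<in> qspan2 1 \<zeta>"
  proof -
    obtain p q where z_eq: "z = of_rat p + of_rat q * \<zeta>"
      using z by (auto simp: qspan2_iff)
    have "cnj \<zeta> = - \<zeta>"
      using assms(1) by (simp add: complex_eq_iff)
    then have "cnj z = of_rat p * 1 + of_rat (- q) * \<zeta>"
      unfolding z_eq by (simp add: of_rat_minus)
    then show ?thesis
      unfolding qspan2_iff by blast
  qed
  have "r_indep2 (cnj z) z"
    using assms(3,4) by (simp add: r_indep2_iff complex_is_Real_iff Im_divide)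
  with cnj_z z have "qspan2 (cnj z) z = qspan2 1 \<zeta>"
    by (rule qspan2_eq_if_r_indep2)
  moreover have "cnj z * (z / cnj z) = z"
    using assms(4) by (simp add: complex_eq_iff)
  ultimately show ?thesis
    using qspan2_scale[of "cnj z" 1 "z / cnj z"] by simp
qed

lemma root_of_unity_power: "root_of_unity a \<Longrightarrow> root_of_unity (a ^ k)"
  unfolding root_of_unity_def by (metis power_mult mult.commute power_one)

lemma root_of_unity_mult:
  assumes "root_of_unity a" "root_of_unity b"
  shows "root_of_unity (a * b)"
proof -
  obtain m n where "m > 0" "a ^ m = 1" "n > 0" "b ^ n = 1"
    using assms by (auto simp: root_of_unity_def)
  then have "(a * b) ^ (m * n) = 1"
    by (metis power_mult power_mult_distrib mult.commute power_one mult_1)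
  with \<open>m > 0\<close> \<open>n > 0\<close> show ?thesis
    unfolding root_of_unity_def by (intro exI[of _ "m * n"]) simp
qed

lemma root_of_unity_divide:
  assumes "root_of_unity a" "root_of_unity b"
  shows "root_of_unity (a / b)"
proof -
  have "root_of_unity (inverse b)"
    using assms(2) by (auto simp: root_of_unity_def power_inverse)
  then show ?thesis
    using assms(1) by (simp add: divide_inverse root_of_unity_mult)
qed

lemma root_of_unity_minus_one: "root_of_unity (-1)"
  unfolding root_of_unity_def by (intro exI[of _ 2]) simp

lemma norm_root_of_unity:
  assumes "root_of_unity z"
  shows "norm z = 1"
proof -
  obtain n where "n > 0" "z ^ n = 1"
    using assms by (auto simp: root_of_unity_def)
  then have "norm z ^ n = 1 ^ n"
    by (metis norm_one norm_power power_one)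
  with \<open>n > 0\<close> show ?thesis
    by (metis norm_ge_zero power_eq_imp_eq_base zero_le_one)
qed

lemma cnj_root_of_unity:
  assumes "root_of_unity z"
  shows "cnj z = inverse z"
proof -
  have "z * cnj z = 1"
    using complex_norm_square[of z] norm_root_of_unity[OF assms] by simp
  then show ?thesis
    by (simp add: inverse_unique)
qed

lemma root_of_unity_cis_iff: "root_of_unity (cis x) \<longleftrightarrow> (\<exists>q::rat. x = of_rat q * pi)"
proof
  assume "root_of_unity (cis x)"
  then obtain n where "n > 0" "cis (real n * x) = 1"
    by (auto simp: root_of_unity_def Complex.DeMoivre)
  then have "cos (real n * x) = 1"
    by (metis Re_complex_of_real cis.sel(1) of_real_1)
  then obtain k :: int where "real n * x = of_int k * 2 * pi"
    by (auto simp: cos_one_2pi_int)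
  with \<open>n > 0\<close> have "x = of_int (2 * k) / of_nat n * pi"
    by (simp add: field_simps)
  then have "x = of_rat (of_int (2 * k) / of_nat n) * pi"
    by (simp add: of_rat_divide of_rat_mult)
  then show "\<exists>q::rat. x = of_rat q * pi" ..
next
  assume "\<exists>q::rat. x = of_rat q * pi"
  then obtain q :: rat where "x = of_rat q * pi" ..
  moreover obtain m k :: int where "k > 0" "q = Fract m k"
    by (cases q) auto
  ultimately have "k > 0" "x = of_int m / of_int k * pi"
    by (simp_all add: of_rat_rat)
  then have "real (nat (2 * k)) * x = 2 * pi * of_int m"
    by (simp add: field_simps)
  then have "cis x ^ nat (2 * k) = 1"
    by (simp add: Complex.DeMoivre)
  with \<open>k > 0\<close> show "root_of_unity (cis x)"
    unfolding root_of_unity_def by (intro exI[of _ "nat (2 * k)"]) simp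
qed

lemma cis_double_Arg:
  assumes "z \<noteq> 0"
  shows "cis (2 * Arg z) = z / cnj z"
proof -
  have "cis (2 * Arg z) = sgn z ^ 2"
    using Complex.DeMoivre[of "Arg z" 2] cis_Arg[OF assms] by simp
  also have "\<dots> = z ^ 2 / (of_real (norm z)) ^ 2"
    by (simp add: sgn_eq power_divide)
  also have "\<dots> = z ^ 2 / (z * cnj z)"
    unfolding of_real_power[symmetric] complex_norm_square ..
  also have "\<dots> = z / cnj z"
    using assms by (simp add: power2_eq_square)
  finally show ?thesis .
qed

lemma rational_Arg_iff_root_of_unity:
  assumes "z \<noteq> 0"
  shows "(\<exists>q::rat. Arg z = of_rat q * pi) \<longleftrightarrow> root_of_unity (z / cnj z)"
proof -
  have "(\<exists>q::rat. Arg z = of_rat q * pi) \<longleftrightarrow> (\<exists>q::rat. 2 * Arg z = of_rat q * pi)"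
  proof
    assume "\<exists>q::rat. 2 * Arg z = of_rat q * pi"
    then obtain q :: rat where "2 * Arg z = of_rat q * pi" ..
    then have "Arg z = of_rat (q / 2) * pi"
      by (simp add: of_rat_divide)
    then show "\<exists>q::rat. Arg z = of_rat q * pi" ..
  next
    assume "\<exists>q::rat. Arg z = of_rat q * pi"
    then obtain q :: rat where "Arg z = of_rat q * pi" ..
    then have "2 * Arg z = of_rat (2 * q) * pi"
      by (simp add: of_rat_mult)
    then show "\<exists>q::rat. 2 * Arg z = of_rat q * pi" ..
  qed
  also have "\<dots> \<longleftrightarrow> root_of_unity (cis (2 * Arg z))"
    by (rule root_of_unity_cis_iff[symmetric])
  also have "\<dots> \<longleftrightarrow> root_of_unity (z / cnj z)"
    by (simp only: cis_double_Arg[OF assms])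
  finally show ?thesis .
qed

lemma rational_Arg_divide:
  assumes "a \<noteq> 0" "b \<noteq> 0" "root_of_unity (a / cnj a)" "root_of_unity (b / cnj b)"
  shows "\<exists>q::rat. Arg (b / a) = of_rat q * pi"
proof -
  have eq: "(b / a) / cnj (b / a) = (b / cnj b) / (a / cnj a)"
    by (simp add: divide_inverse mult_ac)
  have "root_of_unity ((b / cnj b) / (a / cnj a))"
    using assms(3,4) by (rule root_of_unity_divide[rotated])
  then have "root_of_unity ((b / a) / cnj (b / a))"
    unfolding eq .
  with assms(1,2) show ?thesis
    by (simp add: rational_Arg_iff_root_of_unity)
qed

lemma inner_mult_left_complex: "(l * v :: complex) \<bullet> (l * w) = (norm l)\<^sup>2 * (v \<bullet> w)"
  unfolding inner_complex_def cmod_power2 by (simp add: power2_eq_square algebra_simps)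

lemma inner_eq_0_iff_Re_divide: "(u::complex) \<noteq> 0 \<Longrightarrow> u \<bullet> v = 0 \<longleftrightarrow> Re (v / u) = 0"
  by (auto simp: inner_complex_def Re_divide complex_eq_iff mult.commute)

lemma obtain_third_element:
  assumes "finite S" "3 \<le> card S"
  obtains w where "w \<in> S" "w \<noteq> u" "w \<noteq> v"
proof -
  have "card {u, v} < card S"
    using assms(2) by (cases "u = v") auto
  then have "\<not> S \<subseteq> {u, v}"
    using assms(1) card_mono[of "{u, v}" S] by auto
  then show ?thesis
    using that by blast
qed

lemma rational_tuple_subset:
  assumes "rational_tuple n V S" "T \<subseteq> S"
  shows "rational_tuple (card T) V T"
  using assms by (auto simp: rational_tuple_def finite_subset subset_iff)

lemma rational_tuple_homothety:
  assumes "l \<noteq> 0" "rational_tuple n V S"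
  shows "rational_tuple n ((\<lambda>z. l * z) ` V) ((\<lambda>z. l * z) ` S)"
proof -
  have "inj_on (\<lambda>z. l * z) S"
    using assms(1) by (auto intro: inj_onI)
  moreover have "(l * w) / (l * v) = w / v" for v w
    using assms(1) by simp
  ultimately show ?thesis
    using assms by (auto simp: rational_tuple_def card_image)
qed

lemma has_perp_pair_homothety:
  assumes "l \<noteq> 0" "has_perp_pair S"
  shows "has_perp_pair ((\<lambda>z. l * z) ` S)"
  using assms by (auto simp: has_perp_pair_def inner_mult_left_complex)

lemma rational_4_tuple_root_of_unity:
  fixes \<tau> :: complex
  defines "T \<equiv> {1, \<tau>, 1 + \<tau>, 1 - \<tau>}"
  assumes root: "root_of_unity \<tau>" and nonreal: "\<tau> \<notin> \<real>"
  shows "rational_tuple 4 (qspan2 1 \<tau>) T \<and> has_perp_pair T"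
proof -
  have Im_nonzero: "Im \<tau> \<noteq> 0"
    using nonreal by (simp add: complex_is_Real_iff)
  have cnj_eq: "cnj \<tau> = inverse \<tau>"
    using root by (rule cnj_root_of_unity)
  have "\<tau> \<noteq> 0"
    using Im_nonzero by auto
  have unit: "(Re \<tau>)\<^sup>2 + (Im \<tau>)\<^sup>2 = 1"
    using cmod_power2[of \<tau>] norm_root_of_unity[OF root] by simp
  have card: "card T = 4"
    using Im_nonzero by (auto simp: T_def complex_eq_iff)
  have span: "T \<subseteq> qspan2 1 \<tau>"
  proof -
    have "of_rat p + of_rat q * \<tau> \<in> qspan2 1 \<tau>" for p q
      by (auto simp: qspan2_iff)
    from this[of 1 0] this[of 0 1] this[of 1 1] this[of 1 "-1"] show ?thesis
      by (simp add: T_def)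
  qed
  have "1 + \<tau> \<noteq> 0" "1 - \<tau> \<noteq> 0"
    using Im_nonzero by (auto simp: complex_eq_iff)
  with \<open>\<tau> \<noteq> 0\<close> have nonzero: "0 \<notin> T"
    by (auto simp: T_def)
  have "\<forall>x\<in>T. \<forall>y\<in>T. x \<noteq> y \<longrightarrow> Im (cnj x * y) \<noteq> 0"
    using Im_nonzero by (auto simp: T_def algebra_simps)
  then have nonreal_ratios: "\<forall>x\<in>T. \<forall>y\<in>T. x \<noteq> y \<longrightarrow> y / x \<notin> \<real>"
    by (simp add: divide_in_Reals_iff)
  have "\<forall>x\<in>T. root_of_unity (x / cnj x)"
  proof -
    have "(1 + \<tau>) / cnj (1 + \<tau>) = \<tau>" "(1 - \<tau>) / cnj (1 - \<tau>) = - \<tau>" "\<tau> / cnj \<tau> = \<tau> ^ 2"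
      using \<open>\<tau> \<noteq> 0\<close> \<open>1 + \<tau> \<noteq> 0\<close> \<open>1 - \<tau> \<noteq> 0\<close>
      by (auto simp: cnj_eq field_simps power2_eq_square)
    then show ?thesis
      using root root_of_unity_power[OF root] root_of_unity_mult[OF root_of_unity_minus_one root]
      by (auto simp: T_def root_of_unity_def)
  qed
  then have rational_angles: "\<forall>x\<in>T. \<forall>y\<in>T. \<exists>q::rat. Arg (y / x) = of_rat q * pi"
    using nonzero by (auto intro: rational_Arg_divide)
  have "(1 + \<tau>) \<bullet> (1 - \<tau>) = 0"
    using unit by (simp add: inner_complex_def power2_eq_square algebra_simps)
  then have "has_perp_pair T"
    using Im_nonzero by (auto simp: has_perp_pair_def T_def complex_eq_iff)
  with card span nonzero nonreal_ratios rational_angles show ?thesis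
    by (simp add: rational_tuple_def T_def)
qed

lemma rational_4_tuple_if_homothetic_root_of_unity:
  assumes "is_space V" "root_of_unity \<tau>" "homothetic (qspan2 1 \<tau>) V"
  shows "\<exists>S. rational_tuple 4 V S \<and> has_perp_pair S"
proof -
  obtain l where "l \<noteq> 0" "V = (\<lambda>z. l * z) ` qspan2 1 \<tau>"
    using assms(3) by (auto simp: homothetic_def)
  moreover have "\<tau> \<notin> \<real>"
    using assms(1,3) by (rule nonreal_if_is_space_homothetic)
  ultimately show ?thesis
    using rational_4_tuple_root_of_unity[OF assms(2)] rational_tuple_homothety has_perp_pair_homothety
    by blast
qed

lemma homothetic_root_of_unity_if_rational_triple:
  assumes "is_space V" "rational_tuple 3 V S" "has_perp_pair S"
  shows "\<exists>\<tau>. root_of_unity \<tau> \<and> homothetic (qspan2 1 \<tau>) V"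
proof -
  obtain u v where "u \<in> S" "v \<in> S" "u \<noteq> v" "u \<bullet> v = 0"
    using assms(3) by (auto simp: has_perp_pair_def)
  moreover obtain w where "w \<in> S" "w \<noteq> u" "w \<noteq> v"
    using assms(2) obtain_third_element[of S u v] by (auto simp: rational_tuple_def)
  ultimately have "u \<in> V" "v \<in> V" "w \<in> V" "u \<noteq> 0" "u \<bullet> v = 0"
    and "v / u \<notin> \<real>" "w / u \<notin> \<real>" "w / v \<notin> \<real>" "\<exists>q::rat. Arg (w / u) = of_rat q * pi"
    using assms(2) by (auto simp: rational_tuple_def)
  define \<zeta> z where "\<zeta> = v / u" and "z = w / u"
  have "Re \<zeta> = 0"
    using \<open>u \<noteq> 0\<close> \<open>u \<bullet> v = 0\<close> by (simp add: \<zeta>_def inner_eq_0_iff_Re_divide)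
  have V: "V = (\<lambda>x. u * x) ` qspan2 1 \<zeta>"
    unfolding \<zeta>_def using assms(1) \<open>u \<in> V\<close> \<open>v \<in> V\<close> \<open>v / u \<notin> \<real>\<close>
    by (rule is_space_eq_homothetic_qspan2)
  with \<open>w \<in> V\<close> \<open>u \<noteq> 0\<close> have "z \<in> qspan2 1 \<zeta>"
    by (auto simp: z_def)
  have "Im z \<noteq> 0"
    using \<open>w / u \<notin> \<real>\<close> by (simp add: z_def complex_is_Real_iff)
  have "Re z \<noteq> 0"
  proof
    assume "Re z = 0"
    with \<open>Re \<zeta> = 0\<close> have "z / \<zeta> \<in> \<real>"
      by (simp add: complex_is_Real_iff Im_divide)
    with \<open>u \<noteq> 0\<close> \<open>w / v \<notin> \<real>\<close> show False
      by (simp add: z_def \<zeta>_def)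
  qed
  define \<tau> where "\<tau> = z / cnj z"
  have "z \<noteq> 0"
    using \<open>Im z \<noteq> 0\<close> by auto
  with \<open>\<exists>q::rat. Arg (w / u) = of_rat q * pi\<close> have "root_of_unity \<tau>"
    unfolding \<tau>_def by (simp add: rational_Arg_iff_root_of_unity flip: z_def)
  moreover have "V = (\<lambda>x. (u * cnj z) * x) ` qspan2 1 \<tau>"
    using qspan2_imaginary_eq_homothetic[OF \<open>Re \<zeta> = 0\<close> \<open>z \<in> qspan2 1 \<zeta>\<close>]
      \<open>Re z \<noteq> 0\<close> \<open>Im z \<noteq> 0\<close>
    by (simp add: V \<tau>_def image_image mult.assoc)
  moreover have "u * cnj z \<noteq> 0"
    using \<open>u \<noteq> 0\<close> \<open>Im z \<noteq> 0\<close> by auto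
  ultimately show ?thesis
    unfolding homothetic_def by blast
qed

lemma rational_triple_if_rational_tuple:
  assumes "rational_tuple n V S" "3 \<le> n" "has_perp_pair S"
  shows "\<exists>T. rational_tuple 3 V T \<and> has_perp_pair T"
proof -
  obtain u v where "u \<in> S" "v \<in> S" "u \<noteq> v" "u \<bullet> v = 0"
    using assms(3) by (auto simp: has_perp_pair_def)
  moreover obtain w where "w \<in> S" "w \<noteq> u" "w \<noteq> v"
    using assms(1,2) obtain_third_element[of S u v] by (auto simp: rational_tuple_def)
  ultimately have "{u, v, w} \<subseteq> S" "card {u, v, w} = 3" "has_perp_pair {u, v, w}"
    by (auto simp: has_perp_pair_def)
  then show ?thesis
    using rational_tuple_subset[OF assms(1)] by metis
qed

theorem lemma7p1:
  assumes "is_space V"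
  shows "((\<exists>\<tau>. root_of_unity \<tau> \<and> homothetic (qspan2 1 \<tau>) V)
          \<longleftrightarrow> (\<exists>S. rational_tuple 3 V S \<and> has_perp_pair S))
       \<and> ((\<exists>S. rational_tuple 3 V S \<and> has_perp_pair S)
          \<longleftrightarrow> (\<exists>S. rational_tuple 4 V S \<and> has_perp_pair S))"
proof -
  have "\<exists>T. rational_tuple 3 V T \<and> has_perp_pair T"
    if "rational_tuple 4 V S" "has_perp_pair S" for S
    using rational_triple_if_rational_tuple[OF that(1) _ that(2)] by simp
  then show ?thesis
    using rational_4_tuple_if_homothetic_root_of_unity[OF assms]
      homothetic_root_of_unity_if_rational_triple[OF assms] by blast
qed

end
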